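(* Let $w$ be a metric on a finite set $V$ with $|V|\ge 3$, $T$ a minimum spanning tree of $G_w$, and $T'$ any subtree of $T$. Then $\mathsf{TSP}(w)\ge 2\cdot w(T')-2\cdot\mathsf{adv}^*(T')$.
   Context: $G_w$ is the complete graph on $V$ with edge weights $w$; $w(E')=\sum_{e\in E'}w(e)$ and $w(T')=w(E(T'))$. $\mathsf{TSP}(w)$ is the minimum weight of a Hamiltonian cycle in $G_w$. For a pair $e=(u,v)$, $P^T_e$ is the $u$–$v$ path in $T$; $f\in E(T)$ is covered by $e$ iff $f\in E(P^T_e)$; $\mathsf{cov}(E')$ is the set of edges of $T$ covered by some pair of $E'$; for a subtree $T'$, $\mathsf{cov}(E',T')=\mathsf{cov}(E')\cap E(T')$ and $\mathsf{adv}(E',T')=w(\mathsf{cov}(E',T'))-w(E')$. A vertex $x$ is special in $T'$ iff $\deg_{T'}(x)\ne 2$. $\mathsf{adv}^*(T')$ is the maximum of $\mathsf{adv}(E',T')$ over all sets $E'$ of pairs each having at least one endpoint that is a special vertex of $T'$. *)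

theory Defs
  imports Complex_Main
begin

definition is_metric :: "'a set \<Rightarrow> ('a \<Rightarrow> 'a \<Rightarrow> real) \<Rightarrow> bool" where
  "is_metric V w \<longleftrightarrow>
     (\<forall>x\<in>V. \<forall>y\<in>V. w x y \<ge> 0 \<and> w x y = w y x \<and> (w x y = 0 \<longleftrightarrow> x = y)) \<and>
     (\<forall>x\<in>V. \<forall>y\<in>V. \<forall>z\<in>V. w x z \<le> w x y + w y z)"

definition pairs :: "'a set \<Rightarrow> 'a set set" where
  "pairs V = {{u, v} | u v. u \<in> V \<and> v \<in> V \<and> u \<noteq> v}"

text \<open>Weight of an unordered pair (well defined since w is symmetric).\<close>
definition ew :: "('a \<Rightarrow> 'a \<Rightarrow> real) \<Rightarrow> 'a set \<Rightarrow> real" where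
  "ew w e = (let p = (SOME p. e = {fst p, snd p}) in w (fst p) (snd p))"

definition setw :: "('a \<Rightarrow> 'a \<Rightarrow> real) \<Rightarrow> 'a set set \<Rightarrow> real" where
  "setw w E = (\<Sum>e\<in>E. ew w e)"

definition is_walk :: "'a set set \<Rightarrow> 'a list \<Rightarrow> bool" where
  "is_walk E xs \<longleftrightarrow> xs \<noteq> [] \<and> (\<forall>i. Suc i < length xs \<longrightarrow> {xs ! i, xs ! Suc i} \<in> E)"

definition is_path :: "'a set set \<Rightarrow> 'a list \<Rightarrow> bool" where
  "is_path E xs \<longleftrightarrow> is_walk E xs \<and> distinct xs"

definition path_edges :: "'a list \<Rightarrow> 'a set set" where
  "path_edges xs = {{xs ! i, xs ! Suc i} | i. Suc i < length xs}"

definition is_cycle :: "'a set set \<Rightarrow> 'a list \<Rightarrow> bool" where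
  "is_cycle E xs \<longleftrightarrow> length xs \<ge> 3 \<and> is_path E xs \<and> {last xs, hd xs} \<in> E"

definition is_connected :: "'a set \<Rightarrow> 'a set set \<Rightarrow> bool" where
  "is_connected Vs E \<longleftrightarrow>
     (\<forall>u\<in>Vs. \<forall>v\<in>Vs. \<exists>xs. is_path E xs \<and> hd xs = u \<and> last xs = v)"

definition is_tree :: "'a set \<Rightarrow> 'a set set \<Rightarrow> bool" where
  "is_tree Vs E \<longleftrightarrow> finite Vs \<and> Vs \<noteq> {} \<and> E \<subseteq> pairs Vs \<and>
     is_connected Vs E \<and> \<not> (\<exists>xs. is_cycle E xs)"

definition is_mst :: "('a \<Rightarrow> 'a \<Rightarrow> real) \<Rightarrow> 'a set \<Rightarrow> 'a set set \<Rightarrow> bool" where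
  "is_mst w V ET \<longleftrightarrow> is_tree V ET \<and> (\<forall>E'. is_tree V E' \<longrightarrow> setw w ET \<le> setw w E')"

definition is_subtree :: "'a set set \<Rightarrow> 'a set \<Rightarrow> 'a set set \<Rightarrow> bool" where
  "is_subtree ET Vs' E' \<longleftrightarrow> E' \<subseteq> ET \<and> is_tree Vs' E'"

text \<open>Weight of the Hamiltonian cycle visiting the vertices in the order of xs.\<close>
definition tour_weight :: "('a \<Rightarrow> 'a \<Rightarrow> real) \<Rightarrow> 'a list \<Rightarrow> real" where
  "tour_weight w xs = (\<Sum>i<length xs. w (xs ! i) (xs ! (Suc i mod length xs)))"

definition TSP :: "('a \<Rightarrow> 'a \<Rightarrow> real) \<Rightarrow> 'a set \<Rightarrow> real" where
  "TSP w V = Min {tour_weight w xs | xs. distinct xs \<and> set xs = V}"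

definition covers :: "'a set set \<Rightarrow> 'a set \<Rightarrow> 'a set \<Rightarrow> bool" where
  "covers ET e f \<longleftrightarrow> f \<in> ET \<and>
     (\<exists>u v xs. e = {u, v} \<and> is_path ET xs \<and> hd xs = u \<and> last xs = v \<and> f \<in> path_edges xs)"

definition cov :: "'a set set \<Rightarrow> 'a set set \<Rightarrow> 'a set set" where
  "cov ET E' = {f \<in> ET. \<exists>e\<in>E'. covers ET e f}"

definition cov_in :: "'a set set \<Rightarrow> 'a set set \<Rightarrow> 'a set set \<Rightarrow> 'a set set" where
  "cov_in ET E' ET' = cov ET E' \<inter> ET'"

definition adv :: "('a \<Rightarrow> 'a \<Rightarrow> real) \<Rightarrow> 'a set set \<Rightarrow> 'a set set \<Rightarrow> 'a set set \<Rightarrow> real" where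
  "adv w ET E' ET' = setw w (cov_in ET E' ET') - setw w E'"

definition tdeg :: "'a set set \<Rightarrow> 'a \<Rightarrow> nat" where
  "tdeg E x = card {e \<in> E. x \<in> e}"

definition special :: "'a set \<Rightarrow> 'a set set \<Rightarrow> 'a \<Rightarrow> bool" where
  "special Vs' E' x \<longleftrightarrow> x \<in> Vs' \<and> tdeg E' x \<noteq> 2"

definition adv_star :: "('a \<Rightarrow> 'a \<Rightarrow> real) \<Rightarrow> 'a set \<Rightarrow> 'a set set \<Rightarrow> 'a set \<Rightarrow> 'a set set \<Rightarrow> real" where
  "adv_star w V ET Vs' ET' = Max {adv w ET E' ET' | E'.
      E' \<subseteq> pairs V \<and> (\<forall>e\<in>E'. \<exists>x\<in>e. special Vs' ET' x)}"

end

theory Submission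
  imports Defs
begin

text \<open>Let O be the set of odd-degree vertices of T'; by the handshake lemma |O| is even.
Shortcutting an optimal tour to O (triangle inequality) gives a cycle through O of weight at
most TSP(w), and its edges split into two perfect matchings M1, M2 of O. Each Mi covers every
edge f of T': deleting f splits T' into two sides, each containing an odd number of vertices of
O, so some pair of Mi has its endpoints on different sides and its tree path uses f. Odd-degree
vertices are special, hence w(T') - w(Mi) = adv(Mi, T') \<le> adv*(T'), and summing over i = 1, 2
gives the bound.\<close>

section \<open>Paths and components\<close>

lemma is_walk_snoc:
  assumes "is_walk E xs" "{last xs, b} \<in> E"
  shows "is_walk E (xs @ [b])"
  unfolding is_walk_def
proof (intro conjI allI impI)
  fix i assume i: "Suc i < length (xs @ [b])"
  show "{(xs @ [b]) ! i, (xs @ [b]) ! Suc i} \<in> E"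
  proof (cases "Suc i < length xs")
    case True
    then show ?thesis using assms(1) by (simp add: is_walk_def nth_append)
  next
    case False
    then have "i = length xs - 1" using i by simp
    then show ?thesis using assms by (simp add: nth_append last_conv_nth is_walk_def)
  qed
qed simp

lemma is_walk_take: "is_walk E xs \<Longrightarrow> 0 < n \<Longrightarrow> is_walk E (take n xs)"
  unfolding is_walk_def by (auto simp: nth_take)

lemma is_path_mono: "is_path E xs \<Longrightarrow> E \<subseteq> F \<Longrightarrow> is_path F xs"
  unfolding is_path_def is_walk_def by blast

definition adj :: "'a set set \<Rightarrow> ('a \<times> 'a) set" where
  "adj E = {(u, v). {u, v} \<in> E}"

lemma rtrancl_adj_imp_path:
  assumes "(a, b) \<in> (adj E)\<^sup>*"
  shows "\<exists>xs. is_path E xs \<and> hd xs = a \<and> last xs = b"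
  using assms
proof (induction rule: rtrancl_induct)
  case base
  show ?case by (rule exI[of _ "[a]"]) (simp add: is_path_def is_walk_def)
next
  case (step c b)
  then obtain xs where xs: "is_path E xs" "hd xs = a" "last xs = c" by blast
  have ne: "xs \<noteq> []" using xs(1) by (simp add: is_path_def is_walk_def)
  show ?case
  proof (cases "b \<in> set xs")
    case True
    then obtain i where i: "i < length xs" "xs ! i = b" by (metis in_set_conv_nth)
    have "is_path E (take (Suc i) xs)" using xs(1) by (simp add: is_path_def is_walk_take)
    moreover have "last (take (Suc i) xs) = b" using i by (simp add: take_Suc_conv_app_nth)
    ultimately show ?thesis using xs(2) ne by (intro exI[of _ "take (Suc i) xs"]) simp
  next
    case False
    have "is_path E (xs @ [b])" using xs False step(2)
      by (auto simp: is_path_def adj_def intro!: is_walk_snoc)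
    then show ?thesis using xs ne by (intro exI[of _ "xs @ [b]"]) simp
  qed
qed

definition component :: "'a set set \<Rightarrow> 'a \<Rightarrow> 'a set" where
  "component E x = (adj E)\<^sup>* `` {x}"

lemma component_self: "x \<in> component E x"
  by (simp add: component_def)

lemma component_edge_iff:
  assumes "{a, b} \<in> E"
  shows "a \<in> component E x \<longleftrightarrow> b \<in> component E x"
proof -
  have "(a, b) \<in> adj E" "(b, a) \<in> adj E" using assms by (auto simp: adj_def insert_commute)
  then show ?thesis unfolding component_def by (meson Image_singleton_iff rtrancl.rtrancl_into_rtrancl)
qed

lemma component_subset:
  assumes "x \<in> VT" "E \<subseteq> pairs VT"
  shows "component E x \<subseteq> VT"
proof
  fix v assume "v \<in> component E x"
  then have "(x, v) \<in> (adj E)\<^sup>*" by (simp add: component_def)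
  then show "v \<in> VT"
    by (induction rule: rtrancl_induct) (use assms in \<open>auto simp: adj_def pairs_def doubleton_eq_iff\<close>)
qed

lemma tree_edge_vertices:
  "is_tree VT E \<Longrightarrow> e \<in> E \<Longrightarrow> \<exists>a b. e = {a, b} \<and> a \<noteq> b \<and> a \<in> VT \<and> b \<in> VT"
  unfolding is_tree_def pairs_def by blast

lemma tree_finite_edges: "is_tree VT E \<Longrightarrow> finite E"
  unfolding is_tree_def pairs_def by (auto intro: finite_subset[of E "Pow VT"])

lemma tree_edge_component_subset:
  assumes "is_tree VT E" "{x, y} \<in> E"
  shows "component (E - {{x, y}}) x \<subseteq> VT"
proof -
  have "E \<subseteq> pairs VT" "x \<in> VT" using assms by (auto simp: is_tree_def pairs_def doubleton_eq_iff)
  then show ?thesis by (intro component_subset) auto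
qed

lemma tree_edge_separates:
  assumes T: "is_tree VT E" and g: "{x, y} \<in> E"
  shows "y \<notin> component (E - {{x, y}}) x"
proof
  assume "y \<in> component (E - {{x, y}}) x"
  then have "(x, y) \<in> (adj (E - {{x, y}}))\<^sup>*" by (simp add: component_def)
  from rtrancl_adj_imp_path[OF this]
  obtain xs where xs: "is_path (E - {{x, y}}) xs" "hd xs = x" "last xs = y" by blast
  have "x \<noteq> y" using T g unfolding is_tree_def pairs_def by (auto simp: doubleton_eq_iff)
  have "length xs \<ge> 3"
  proof -
    obtain a r where "xs = a # r" using xs(1) by (cases xs) (auto simp: is_path_def is_walk_def)
    moreover have "r \<noteq> []" using xs \<open>x \<noteq> y\<close> \<open>xs = a # r\<close> by auto
    then obtain b r' where "r = b # r'" by (cases r) auto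
    moreover have "r' \<noteq> []"
    proof
      assume "r' = []"
      then have "{x, y} \<in> E - {{x, y}}"
        using xs \<open>xs = a # r\<close> \<open>r = b # r'\<close> by (force simp: is_path_def is_walk_def)
      then show False by simp
    qed
    ultimately show ?thesis by (cases r') auto
  qed
  moreover have "is_path E xs" using xs(1) by (rule is_path_mono) blast
  moreover have "{last xs, hd xs} \<in> E" using xs g by (simp add: insert_commute)
  ultimately have "is_cycle E xs" by (simp add: is_cycle_def)
  then show False using T by (auto simp: is_tree_def)
qed

lemma exists_consecutive_exit:
  "xs \<noteq> [] \<Longrightarrow> hd xs \<in> X \<Longrightarrow> last xs \<notin> X \<Longrightarrow>
    \<exists>i. Suc i < length xs \<and> xs ! i \<in> X \<and> xs ! Suc i \<notin> X"
proof (induction xs)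
  case (Cons a r)
  show ?case
  proof (cases r)
    case Nil
    then show ?thesis using Cons.prems by simp
  next
    case (Cons b r')
    show ?thesis
    proof (cases "b \<in> X")
      case True
      then obtain i where "Suc i < length r" "r ! i \<in> X" "r ! Suc i \<notin> X"
        using Cons.IH Cons.prems \<open>r = b # r'\<close> by auto
      then show ?thesis by (intro exI[of _ "Suc i"]) simp
    next
      case False
      then show ?thesis using Cons.prems \<open>r = b # r'\<close> by (intro exI[of _ 0]) simp
    qed
  qed
qed simp

lemma tree_edge_covered:
  assumes T: "is_tree VT E" and "E \<subseteq> ET" and g: "{x, y} \<in> E"
    and a: "a \<in> component (E - {{x, y}}) x"
    and b: "b \<in> VT" "b \<notin> component (E - {{x, y}}) x"
  shows "covers ET {a, b} {x, y}"
proof -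
  let ?X = "component (E - {{x, y}}) x"
  have "a \<in> VT" using a tree_edge_component_subset[OF T g] by blast
  with T b(1) obtain xs where xs: "is_path E xs" "hd xs = a" "last xs = b"
    unfolding is_tree_def is_connected_def by blast
  then have "xs \<noteq> []" by (simp add: is_path_def is_walk_def)
  with xs a b obtain i where i: "Suc i < length xs" "xs ! i \<in> ?X" "xs ! Suc i \<notin> ?X"
    using exists_consecutive_exit[of xs ?X] by blast
  have "{xs ! i, xs ! Suc i} \<in> E" using xs(1) i(1) by (simp add: is_path_def is_walk_def)
  \<comment> \<open>{x, y} is the only edge of E leaving the component of x in E - {{x, y}}\<close>
  moreover have "{xs ! i, xs ! Suc i} \<notin> E - {{x, y}}"
    using i(2,3) component_edge_iff[of "xs ! i" "xs ! Suc i" "E - {{x, y}}" x] by blast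
  ultimately have "{xs ! i, xs ! Suc i} = {x, y}" by blast
  then have "{x, y} \<in> path_edges xs" using i(1) unfolding path_edges_def by blast
  moreover have "is_path ET xs" using xs(1) \<open>E \<subseteq> ET\<close> by (rule is_path_mono)
  ultimately show ?thesis using xs g \<open>E \<subseteq> ET\<close> unfolding covers_def by blast
qed

section \<open>Parity of degrees\<close>

lemma sum_tdeg_eq:
  assumes "finite E" "finite X"
  shows "(\<Sum>v\<in>X. tdeg E v) = (\<Sum>e\<in>E. card (e \<inter> X))"
proof -
  have "(\<Sum>v\<in>X. tdeg E v) = (\<Sum>v\<in>X. \<Sum>e\<in>E. if v \<in> e then 1 else 0)"
    unfolding tdeg_def using assms(1) by (simp add: sum.inter_filter[symmetric])
  also have "\<dots> = (\<Sum>e\<in>E. \<Sum>v\<in>X. if v \<in> e then 1 else 0)"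
    by (rule sum.swap)
  also have "\<dots> = (\<Sum>e\<in>E. card (e \<inter> X))"
    using assms(2) by (simp add: sum.inter_filter[symmetric] Int_def conj_commute)
  finally show ?thesis .
qed

lemma even_card_odd_tdeg_iff:
  "finite E \<Longrightarrow> finite X \<Longrightarrow>
    even (card {v\<in>X. odd (tdeg E v)}) \<longleftrightarrow> even (\<Sum>e\<in>E. card (e \<inter> X))"
  by (metis even_sum_iff sum_tdeg_eq)

definition odd_degree_vertices :: "'a set \<Rightarrow> 'a set set \<Rightarrow> 'a set" where
  "odd_degree_vertices VT E = {v\<in>VT. odd (tdeg E v)}"

lemma even_card_odd_degree_vertices:
  assumes T: "is_tree VT E"
  shows "even (card (odd_degree_vertices VT E))"
proof -
  have "even (card (e \<inter> VT))" if "e \<in> E" for e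
    using tree_edge_vertices[OF T that] by auto
  then show ?thesis
    using T tree_finite_edges[OF T] even_card_odd_tdeg_iff[of E VT]
    by (auto simp: odd_degree_vertices_def is_tree_def intro: dvd_sum)
qed

lemma odd_card_odd_degree_vertices_side:
  assumes T: "is_tree VT E" and g: "{x, y} \<in> E"
  shows "odd (card (odd_degree_vertices VT E \<inter> component (E - {{x, y}}) x))"
proof -
  let ?X = "component (E - {{x, y}}) x"
  have XV: "?X \<subseteq> VT" using tree_edge_component_subset[OF T g] .
  then have fX: "finite ?X" using T finite_subset by (auto simp: is_tree_def)
  have "{x, y} \<inter> ?X = {x}" using tree_edge_separates[OF T g] component_self by auto
  then have g1: "card ({x, y} \<inter> ?X) = 1" by simp
  have "even (card (e \<inter> ?X))" if e: "e \<in> E - {{x, y}}" for e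
  proof -
    obtain a b where "e = {a, b}" "a \<noteq> b" using tree_edge_vertices[OF T, of e] e by blast
    moreover have "a \<in> ?X \<longleftrightarrow> b \<in> ?X" using component_edge_iff[of a b "E - {{x, y}}" x] e \<open>e = {a, b}\<close> by blast
    ultimately show ?thesis by (cases "a \<in> ?X") auto
  qed
  then have "even (\<Sum>e\<in>E - {{x, y}}. card (e \<inter> ?X))" by (intro dvd_sum)
  moreover have "(\<Sum>e\<in>E. card (e \<inter> ?X)) = 1 + (\<Sum>e\<in>E - {{x, y}}. card (e \<inter> ?X))"
    using tree_finite_edges[OF T] g g1 by (simp add: sum.remove)
  ultimately have "odd (card {v\<in>?X. odd (tdeg E v)})"
    using even_card_odd_tdeg_iff[OF tree_finite_edges[OF T] fX] by simp
  moreover have "odd_degree_vertices VT E \<inter> ?X = {v\<in>?X. odd (tdeg E v)}"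
    using XV by (auto simp: odd_degree_vertices_def)
  ultimately show ?thesis by simp
qed

section \<open>Pairings of the odd-degree vertices cover the tree\<close>

fun pairing :: "'a list \<Rightarrow> 'a set set" where
  "pairing (a # b # r) = insert {a, b} (pairing r)"
| "pairing _ = {}"

lemma finite_pairing [simp]: "finite (pairing zs)"
  by (induction zs rule: pairing.induct) auto

lemma pairing_elem:
  "distinct zs \<Longrightarrow> e \<in> pairing zs \<Longrightarrow> \<exists>a b. e = {a, b} \<and> a \<noteq> b \<and> a \<in> set zs \<and> b \<in> set zs"
  by (induction zs rule: pairing.induct) auto

lemma pairing_crosses:
  "distinct zs \<Longrightarrow> even (length zs) \<Longrightarrow> odd (card (set zs \<inter> X)) \<Longrightarrow>
    \<exists>a b. {a, b} \<in> pairing zs \<and> a \<in> X \<and> b \<notin> X"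
proof (induction zs rule: pairing.induct)
  case (1 a b r)
  show ?case
  proof (cases "a \<in> X \<longleftrightarrow> b \<in> X")
    case True
    have "set (a # b # r) \<inter> X = ({a, b} \<inter> X) \<union> (set r \<inter> X)" by auto
    moreover have "even (card ({a, b} \<inter> X))" using True "1.prems"(1) by (cases "a \<in> X") auto
    moreover have "card (({a, b} \<inter> X) \<union> (set r \<inter> X)) = card ({a, b} \<inter> X) + card (set r \<inter> X)"
      using "1.prems"(1) by (intro card_Un_disjoint) auto
    ultimately have "odd (card (set r \<inter> X))" using "1.prems"(3) by simp
    then obtain c d where "{c, d} \<in> pairing r" "c \<in> X" "d \<notin> X"
      using "1.IH" "1.prems"(1,2) by auto
    then show ?thesis by auto
  next
    case False
    then have "{a, b} \<in> pairing (a # b # r) \<and> a \<in> X \<and> b \<notin> X \<or>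
        {b, a} \<in> pairing (a # b # r) \<and> b \<in> X \<and> a \<notin> X"
      by (auto simp: insert_commute)
    then show ?thesis by blast
  qed
qed auto

lemma pairing_covers_tree:
  assumes T: "is_tree VT E" and "E \<subseteq> ET"
    and zs: "distinct zs" "set zs = odd_degree_vertices VT E"
  shows "cov_in ET (pairing zs) E = E"
proof -
  have "even (length zs)"
    using even_card_odd_degree_vertices[OF T] zs distinct_card by metis
  have "\<exists>e\<in>pairing zs. covers ET e g" if g: "g \<in> E" for g
  proof -
    obtain x y where xy: "g = {x, y}" using tree_edge_vertices[OF T g] by blast
    let ?X = "component (E - {{x, y}}) x"
    have "odd (card (set zs \<inter> ?X))"
      using odd_card_odd_degree_vertices_side[OF T] g xy zs(2) by simp
    then obtain a b where ab: "{a, b} \<in> pairing zs" "a \<in> ?X" "b \<notin> ?X"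
      using pairing_crosses zs(1) \<open>even (length zs)\<close> by blast
    have "b \<in> VT" using pairing_elem[OF zs(1) ab(1)] zs(2)
      by (auto simp: odd_degree_vertices_def doubleton_eq_iff)
    then show ?thesis using tree_edge_covered[OF T \<open>E \<subseteq> ET\<close>] g xy ab by blast
  qed
  then show ?thesis using \<open>E \<subseteq> ET\<close> by (auto simp: cov_in_def cov_def)
qed

section \<open>Tour weights\<close>

fun walk_weight :: "('a \<Rightarrow> 'a \<Rightarrow> real) \<Rightarrow> 'a list \<Rightarrow> real" where
  "walk_weight w (a # b # r) = w a b + walk_weight w (b # r)"
| "walk_weight w _ = 0"

fun pairing_weight :: "('a \<Rightarrow> 'a \<Rightarrow> real) \<Rightarrow> 'a list \<Rightarrow> real" where
  "pairing_weight w (a # b # r) = w a b + pairing_weight w r"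
| "pairing_weight w _ = 0"

lemma walk_weight_conv_sum: "walk_weight w ys = (\<Sum>i < length ys - 1. w (ys ! i) (ys ! Suc i))"
proof (induction ys rule: induct_list012)
  case (3 a b r)
  then show ?case by (simp add: sum.lessThan_Suc_shift del: sum.lessThan_Suc)
qed auto

lemma walk_weight_snoc: "xs \<noteq> [] \<Longrightarrow> walk_weight w (xs @ [y]) = walk_weight w xs + w (last xs) y"
  by (induction xs rule: induct_list012) auto

lemma tour_weight_conv_walk_weight:
  assumes "xs \<noteq> []"
  shows "tour_weight w xs = walk_weight w (xs @ [hd xs])"
proof -
  have "(xs @ [hd xs]) ! Suc i = xs ! (Suc i mod length xs)" if "i < length xs" for i
  proof (cases "Suc i < length xs")
    case False
    then have "Suc i = length xs" using that by simp
    then show ?thesis using assms by (simp add: nth_append hd_conv_nth)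
  qed (simp add: nth_append)
  then show ?thesis
    by (auto simp: tour_weight_def walk_weight_conv_sum nth_append intro: sum.cong)
qed

lemma tour_weight_rotate1: "tour_weight w (rotate1 xs) = tour_weight w xs"
proof (cases xs)
  case (Cons a r)
  show ?thesis
  proof (cases r)
    case (Cons b r')
    have "walk_weight w (b # r' @ [a, b]) = walk_weight w (b # r' @ [a]) + w a b"
      using walk_weight_snoc[of "b # r' @ [a]" w b] by simp
    then show ?thesis using \<open>xs = a # r\<close> Cons by (simp add: tour_weight_conv_walk_weight)
  qed (simp add: \<open>xs = a # r\<close>)
qed simp

lemma tour_weight_rotate: "tour_weight w (rotate n xs) = tour_weight w xs"
  by (induction n) (simp_all add: tour_weight_rotate1)

lemma walk_weight_filter_le:
  assumes tri: "\<And>x y z. x \<in> V \<Longrightarrow> y \<in> V \<Longrightarrow> z \<in> V \<Longrightarrow> w x z \<le> w x y + w y z"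
  shows "set (a # r) \<subseteq> V \<Longrightarrow> (r = [] \<or> P (last r)) \<Longrightarrow>
    walk_weight w (a # filter P r) \<le> walk_weight w (a # r)"
proof (induction r arbitrary: a)
  case (Cons b r')
  show ?case
  proof (cases "P b")
    case True
    then show ?thesis using Cons.IH[of b] Cons.prems by (cases r') auto
  next
    case False
    then obtain c r'' where r': "r' = c # r''" using Cons.prems by (cases r') auto
    have "walk_weight w (a # filter P r') \<le> walk_weight w (a # r')"
      using Cons.IH[of a] Cons.prems r' by auto
    moreover have "w a c \<le> w a b + w b c" using tri Cons.prems r' by simp
    ultimately show ?thesis using False r' by simp
  qed
qed simp

lemma tour_weight_nonneg:
  assumes "is_metric V w" "set xs \<subseteq> V"
  shows "0 \<le> tour_weight w xs"
  unfolding tour_weight_def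
proof (rule sum_nonneg)
  fix i assume "i \<in> {..<length xs}"
  then have "i < length xs" "Suc i mod length xs < length xs" by (auto intro: mod_less_divisor)
  then have "xs ! i \<in> V" "xs ! (Suc i mod length xs) \<in> V" using assms(2) nth_mem by blast+
  then show "0 \<le> w (xs ! i) (xs ! (Suc i mod length xs))" using assms(1) by (simp add: is_metric_def)
qed

lemma shortcut_tour:
  assumes w: "is_metric V w" and xs: "distinct xs" "set xs \<subseteq> V" and S: "S \<subseteq> set xs"
  shows "\<exists>ys. distinct ys \<and> set ys = S \<and> tour_weight w ys \<le> tour_weight w xs"
proof (cases "S = {}")
  case True
  then show ?thesis using tour_weight_nonneg[OF w xs(2)] by (intro exI[of _ "[]"]) (simp add: tour_weight_def)
next
  case False
  then obtain s where "s \<in> S" by blast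
  then obtain i where i: "i < length xs" "xs ! i = s" using S by (metis in_set_conv_nth subsetD)
  \<comment> \<open>rotate the tour to start at s, so that the shortcut tour closes at s as well\<close>
  have "rotate i xs \<noteq> []" "hd (rotate i xs) = s" using i hd_rotate_conv_nth[of xs i] by force+
  then obtain r where r: "rotate i xs = s # r" by (metis list.collapse)
  let ?ys = "s # filter (\<lambda>v. v \<in> S) r"
  have "distinct (s # r)" "set (s # r) = set xs" using xs(1) r[symmetric] by simp_all
  then have "distinct ?ys" "set ?ys = S" using S \<open>s \<in> S\<close> by auto
  have "tour_weight w ?ys = walk_weight w (s # filter (\<lambda>v. v \<in> S) (r @ [s]))"
    using \<open>s \<in> S\<close> by (simp add: tour_weight_conv_walk_weight)
  also have "\<dots> \<le> walk_weight w (s # r @ [s])"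
    using walk_weight_filter_le[of V w s "r @ [s]" "\<lambda>v. v \<in> S"] w xs(2) \<open>set (s # r) = set xs\<close> \<open>s \<in> S\<close>
    by (auto simp: is_metric_def)
  also have "\<dots> = tour_weight w xs"
    using r tour_weight_rotate[of w i xs] by (simp add: tour_weight_conv_walk_weight)
  finally show ?thesis using \<open>distinct ?ys\<close> \<open>set ?ys = S\<close> by blast
qed

lemma walk_weight_eq_pairing_weights:
  "walk_weight w xs = pairing_weight w xs + pairing_weight w (tl xs)"
  by (induction xs rule: induct_list012) auto

lemma pairing_weight_snoc: "even (length xs) \<Longrightarrow> pairing_weight w (xs @ [y]) = pairing_weight w xs"
  by (induction xs rule: pairing.induct) auto

lemma tour_weight_eq_pairing_weights:
  assumes "even (length xs)"
  shows "tour_weight w xs = pairing_weight w xs + pairing_weight w (rotate1 xs)"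
proof (cases xs)
  case (Cons a r)
  then show ?thesis
    using assms walk_weight_eq_pairing_weights[of w "xs @ [a]"] pairing_weight_snoc[of xs w a]
    by (simp add: tour_weight_conv_walk_weight)
qed (simp add: tour_weight_def)

lemma TSP_attained:
  assumes "finite V"
  shows "\<exists>H. distinct H \<and> set H = V \<and> TSP w V = tour_weight w H"
proof -
  let ?S = "{tour_weight w xs | xs. distinct xs \<and> set xs = V}"
  have "?S \<subseteq> tour_weight w ` {xs. set xs \<subseteq> V \<and> distinct xs}" by auto
  then have "finite ?S" using finite_subset_distinct[OF assms] finite_surj by blast
  moreover have "?S \<noteq> {}" using finite_distinct_list[OF assms] by auto
  ultimately have "TSP w V \<in> ?S" unfolding TSP_def by (rule Min_in)
  then show ?thesis by auto
qed

section \<open>Advantage of a pairing\<close>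

lemma ew_doubleton: "w a b = w b a \<Longrightarrow> ew w {a, b} = w a b"
proof -
  assume sym: "w a b = w b a"
  let ?p = "SOME p. {a, b} = {fst p, snd p}"
  have "{a, b} = {fst ?p, snd ?p}" by (rule someI[of _ "(a, b)"]) simp
  then have "?p = (a, b) \<or> ?p = (b, a)" by (auto simp: doubleton_eq_iff prod_eq_iff)
  then show ?thesis using sym by (auto simp: ew_def Let_def)
qed

lemma setw_pairing_le:
  assumes w: "is_metric V w"
  shows "set zs \<subseteq> V \<Longrightarrow> setw w (pairing zs) \<le> pairing_weight w zs"
proof (induction zs rule: pairing.induct)
  case (1 a b r)
  have "ew w {a, b} = w a b" "0 \<le> w a b"
    using w "1.prems" by (simp_all add: ew_doubleton is_metric_def)
  moreover have "setw w (insert {a, b} (pairing r)) \<le> ew w {a, b} + setw w (pairing r)"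
    using calculation by (cases "{a, b} \<in> pairing r") (simp_all add: setw_def insert_absorb)
  ultimately show ?case using "1.IH" "1.prems" by simp
qed (simp_all add: setw_def)

lemma adv_le_adv_star:
  assumes "finite V" and "E' \<subseteq> pairs V" and "\<forall>e\<in>E'. \<exists>x\<in>e. special VT' ET' x"
  shows "adv w ET E' ET' \<le> adv_star w V ET VT' ET'"
proof -
  have "finite (pairs V)"
    using assms(1) by (auto simp: pairs_def intro: finite_subset[of _ "Pow V"])
  then have "finite {adv w ET E' ET' | E'. E' \<subseteq> pairs V \<and> (\<forall>e\<in>E'. \<exists>x\<in>e. special VT' ET' x)}"
    by (auto intro: finite_surj[of "Pow (pairs V)" _ "\<lambda>E'. adv w ET E' ET'"])
  then show ?thesis unfolding adv_star_def by (rule Max_ge) (use assms(2,3) in blast)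
qed

lemma odd_degree_vertices_subset:
  assumes "E \<subseteq> pairs V"
  shows "odd_degree_vertices VT E \<subseteq> V"
proof
  fix v assume "v \<in> odd_degree_vertices VT E"
  then have "odd (card {e \<in> E. v \<in> e})" by (simp add: odd_degree_vertices_def tdeg_def)
  then have "{e \<in> E. v \<in> e} \<noteq> {}" by (intro notI) simp
  then show "v \<in> V" using assms by (auto simp: pairs_def)
qed

lemma subtree_weight_le_pairing_weight:
  assumes "finite V" "is_metric V w" "ET \<subseteq> pairs V" "is_subtree ET VT' ET'"
    and zs: "distinct zs" "set zs = odd_degree_vertices VT' ET'"
  shows "setw w ET' \<le> pairing_weight w zs + adv_star w V ET VT' ET'"
proof -
  have T: "is_tree VT' ET'" and "ET' \<subseteq> ET" using assms(4) by (simp_all add: is_subtree_def)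
  have OV: "set zs \<subseteq> V"
    using odd_degree_vertices_subset[of ET' V VT'] zs(2) \<open>ET' \<subseteq> ET\<close> assms(3) by blast
  have "adv w ET (pairing zs) ET' = setw w ET' - setw w (pairing zs)"
    using pairing_covers_tree[OF T \<open>ET' \<subseteq> ET\<close> zs] by (simp add: adv_def)
  moreover have "pairing zs \<subseteq> pairs V" "\<forall>e\<in>pairing zs. \<exists>x\<in>e. special VT' ET' x"
    using pairing_elem[OF zs(1)] OV zs(2)
    by (fastforce simp: pairs_def special_def odd_degree_vertices_def)+
  then have "adv w ET (pairing zs) ET' \<le> adv_star w V ET VT' ET'"
    using adv_le_adv_star[OF assms(1)] by blast
  moreover have "setw w (pairing zs) \<le> pairing_weight w zs"
    using setw_pairing_le[OF assms(2) OV] .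
  ultimately show ?thesis by linarith
qed

theorem mainTheorem3:
  fixes V :: "'a set" and w :: "'a \<Rightarrow> 'a \<Rightarrow> real"
    and ET :: "'a set set" and VT' :: "'a set" and ET' :: "'a set set"
  assumes "finite V" and "card V \<ge> 3"
    and "is_metric V w"
    and "is_mst w V ET"
    and "is_subtree ET VT' ET'"
  shows "TSP w V \<ge> 2 * setw w ET' - 2 * adv_star w V ET VT' ET'"
proof -
  have "ET \<subseteq> pairs V" using assms(4) by (simp add: is_mst_def is_tree_def)
  have T: "is_tree VT' ET'" and "ET' \<subseteq> ET" using assms(5) by (simp_all add: is_subtree_def)
  let ?O = "odd_degree_vertices VT' ET'"
  obtain H where H: "distinct H" "set H = V" "TSP w V = tour_weight w H"
    using TSP_attained[OF assms(1)] by blast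
  have "?O \<subseteq> set H"
    using odd_degree_vertices_subset[of ET' V VT'] \<open>ET' \<subseteq> ET\<close> \<open>ET \<subseteq> pairs V\<close> H(2) by blast
  then have "\<exists>ys. distinct ys \<and> set ys = ?O \<and> tour_weight w ys \<le> tour_weight w H"
    using shortcut_tour[OF assms(3) H(1)] H(2) by blast
  then obtain os where os: "distinct os" "set os = ?O" "tour_weight w os \<le> TSP w V"
    using H(3) by auto
  have bound: "setw w ET' \<le> pairing_weight w zs + adv_star w V ET VT' ET'"
    if "distinct zs" "set zs = ?O" for zs
    using subtree_weight_le_pairing_weight[OF assms(1,3) \<open>ET \<subseteq> pairs V\<close> assms(5) that] .
  have "even (length os)" using even_card_odd_degree_vertices[OF T] os(1,2) distinct_card by metis
  then have "tour_weight w os = pairing_weight w os + pairing_weight w (rotate1 os)"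
    by (rule tour_weight_eq_pairing_weights)
  with bound[OF os(1,2)] bound[of "rotate1 os"] os show ?thesis by simp
qed

end
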